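(* Let $d:\mathbb{Z}\to\mathbb{C}$ be bounded and $(Ju)(n)=u(n-1)+d(n)u(n)+u(n+1)$ on $\ell^2(\mathbb{Z})$. Suppose that $\Im(d(n))\to0$ as $n\to+\infty$ (or as $n\to-\infty$) and that there exists $m\in\mathbb{Z}$ with $\Im(d(m))\ne0$ and $\Im(d(m+1))\ne0$. Then $J$ has no boundary eigenvalues.
   Context: The numerical range is $\operatorname{Num}(J)=\{\langle Ju,u\rangle:\|u\|=1\}$, and a boundary eigenvalue of $J$ is an eigenvalue of $J$ lying in the topological boundary of $\operatorname{Num}(J)$. *)

theory Defs
  imports "HOL-Analysis.Analysis"
begin

definition l2Z :: "(int \<Rightarrow> complex) set" where
  "l2Z = {u. (\<lambda>n. (cmod (u n))^2) summable_on UNIV}"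

definition l2Z_inner :: "(int \<Rightarrow> complex) \<Rightarrow> (int \<Rightarrow> complex) \<Rightarrow> complex" where
  "l2Z_inner v u = (\<Sum>\<^sub>\<infinity>n. v n * cnj (u n))"

definition l2Z_norm :: "(int \<Rightarrow> complex) \<Rightarrow> real" where
  "l2Z_norm u = sqrt (\<Sum>\<^sub>\<infinity>n. (cmod (u n))^2)"

definition jacobiJ :: "(int \<Rightarrow> complex) \<Rightarrow> (int \<Rightarrow> complex) \<Rightarrow> (int \<Rightarrow> complex)" where
  "jacobiJ d u = (\<lambda>n. u (n - 1) + d n * u n + u (n + 1))"

definition numrange :: "(int \<Rightarrow> complex) \<Rightarrow> complex set" where
  "numrange d = {l2Z_inner (jacobiJ d u) u | u. u \<in> l2Z \<and> l2Z_norm u = 1}"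

definition is_eigenvalue :: "(int \<Rightarrow> complex) \<Rightarrow> complex \<Rightarrow> bool" where
  "is_eigenvalue d z \<longleftrightarrow> (\<exists>u \<in> l2Z. u \<noteq> (\<lambda>_. 0) \<and> jacobiJ d u = (\<lambda>n. z * u n))"

definition is_boundary_eigenvalue :: "(int \<Rightarrow> complex) \<Rightarrow> complex \<Rightarrow> bool" where
  "is_boundary_eigenvalue d z \<longleftrightarrow> is_eigenvalue d z \<and> z \<in> frontier (numrange d)"

end

theory Submission
  imports Defs
begin

(*
  Let J be the Jacobi operator with bounded diagonal d and suppose J u = z u with
  ||u|| = 1.  The proof has two halves.

  The adjoint of J is the Jacobi operator J* with diagonal cnj d.
      If J* u ~= cnj z u, then w = J* u - cnj z u is a nonzero vector orthogonal to u,
      and the Rayleigh quotients of the vectors u + t w (t complex) fill a whole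
      neighbourhood of z; so z is an interior point of Num(J).  Hence at a boundary
      eigenvalue the eigenvector also satisfies J* u = cnj z u.

  Subtracting the two eigen-equations pointwise gives
      Im d(n) = Im z wherever u(n) ~= 0, and the three-term recurrence shows that an
      eigenvector vanishing at two consecutive sites vanishes identically.  Since
      Im d -> 0 at one end, Im z ~= 0 would force two consecutive zeros of u; so Im z = 0,
      and then the pair m, m+1 with Im d ~= 0 forces two consecutive zeros as well.
*)

section \<open>The space l^2(Z)\<close>

lemma bij_shift: "bij_betw (\<lambda>n::int. n + k) UNIV UNIV"
  by (rule bij_betwI[where g="\<lambda>n. n - k"]) auto

lemma l2Z_shift:
  assumes "u \<in> l2Z" shows "(\<lambda>n. u (n + k)) \<in> l2Z"
proof -
  have "(\<lambda>n. (cmod (u n))^2) summable_on UNIV" using assms by (simp add: l2Z_def)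
  then have "(\<lambda>n. (\<lambda>m. (cmod (u m))^2) (n + k)) summable_on UNIV"
    using summable_on_reindex_bij_betw[OF bij_shift[of k], of "\<lambda>m. (cmod (u m))^2"] by simp
  then show ?thesis by (simp add: l2Z_def)
qed

lemma l2Z_scale:
  assumes "u \<in> l2Z" shows "(\<lambda>n. c * u n) \<in> l2Z"
proof -
  have "(\<lambda>n. (cmod c)^2 * (cmod (u n))^2) summable_on UNIV"
    using assms by (intro summable_on_cmult_right) (simp add: l2Z_def)
  then show ?thesis by (simp add: l2Z_def norm_mult power_mult_distrib)
qed

lemma l2Z_add:
  assumes "u \<in> l2Z" "v \<in> l2Z" shows "(\<lambda>n. u n + v n) \<in> l2Z"
proof -
  have dom: "(\<lambda>n. 2 * (cmod (u n))^2 + 2 * (cmod (v n))^2) summable_on UNIV"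
    using assms by (intro summable_on_add summable_on_cmult_right) (auto simp: l2Z_def)
  have "(cmod (u n + v n))^2 \<le> 2 * (cmod (u n))^2 + 2 * (cmod (v n))^2" for n
  proof -
    have "(cmod (u n + v n))^2 \<le> (cmod (u n) + cmod (v n))^2"
      by (simp add: power_mono norm_triangle_ineq)
    also have "\<dots> \<le> 2 * (cmod (u n))^2 + 2 * (cmod (v n))^2"
      using zero_le_power2[of "cmod (u n) - cmod (v n)"] by (simp add: power2_sum power2_diff)
    finally show ?thesis .
  qed
  then show ?thesis unfolding l2Z_def
    by (auto intro: summable_on_comparison_test[OF dom])
qed

lemma l2Z_mult_bounded:
  assumes "u \<in> l2Z" "bounded (range d)" shows "(\<lambda>n. d n * u n) \<in> l2Z"
proof -
  obtain M where M: "\<And>n. cmod (d n) \<le> M" using assms(2) unfolding bounded_iff by auto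
  have dom: "(\<lambda>n. M^2 * (cmod (u n))^2) summable_on UNIV"
    using assms by (intro summable_on_cmult_right) (auto simp: l2Z_def)
  have "(cmod (d n * u n))^2 \<le> M^2 * (cmod (u n))^2" for n
    by (simp add: norm_mult power_mult_distrib mult_right_mono power_mono M)
  then show ?thesis unfolding l2Z_def
    by (auto intro: summable_on_comparison_test[OF dom])
qed

lemma l2Z_jacobi:
  assumes "u \<in> l2Z" "bounded (range d)" shows "jacobiJ d u \<in> l2Z"
proof -
  have "(\<lambda>n. u (n - 1)) \<in> l2Z" using l2Z_shift[OF assms(1), of "-1"] by simp
  then show ?thesis unfolding jacobiJ_def
    by (intro l2Z_add l2Z_shift l2Z_mult_bounded assms)
qed

text \<open>By |v u| <= |v|^2 + |u|^2 the series defining the inner product converges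
  absolutely, which makes it additive in each argument.\<close>

lemma inner_summable:
  assumes "u \<in> l2Z" "v \<in> l2Z"
  shows "(\<lambda>n. v n * cnj (u n)) summable_on UNIV"
proof (rule abs_summable_summable)
  have "(\<lambda>n. norm ((cmod (v n))^2 + (cmod (u n))^2)) summable_on UNIV"
    using assms by (simp add: summable_on_add l2Z_def)
  then show "(\<lambda>n. norm (v n * cnj (u n))) summable_on UNIV"
  proof (rule Infinite_Sum.abs_summable_on_comparison_test)
    fix n
    have "cmod (v n) * cmod (u n) \<le> (cmod (v n))^2 + (cmod (u n))^2"
      using sum_squares_bound[of "cmod (v n)" "cmod (u n)"]
        mult_nonneg_nonneg[OF norm_ge_zero norm_ge_zero, of "v n" "u n"] by linarith
    then show "norm (v n * cnj (u n)) \<le> norm ((cmod (v n))^2 + (cmod (u n))^2)"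
      by (simp add: norm_mult)
  qed
qed

lemma inner_add_left:
  assumes "a \<in> l2Z" "b \<in> l2Z" "u \<in> l2Z"
  shows "l2Z_inner (\<lambda>n. a n + b n) u = l2Z_inner a u + l2Z_inner b u"
  unfolding l2Z_inner_def by (simp add: distrib_right infsum_add inner_summable assms)

lemma inner_scale_left: "l2Z_inner (\<lambda>n. c * a n) u = c * l2Z_inner a u"
  unfolding l2Z_inner_def by (subst infsum_cmult_right'[symmetric]) (simp add: mult.assoc)

lemma inner_cnj: "l2Z_inner u v = cnj (l2Z_inner v u)"
  unfolding l2Z_inner_def by (subst infsum_cnj[symmetric]) (simp add: mult.commute)

lemma inner_add_right:
  assumes "a \<in> l2Z" "b \<in> l2Z" "u \<in> l2Z"
  shows "l2Z_inner u (\<lambda>n. a n + b n) = l2Z_inner u a + l2Z_inner u b"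
  using inner_add_left[OF assms] by (metis inner_cnj complex_cnj_add)

lemma inner_scale_right: "l2Z_inner u (\<lambda>n. c * a n) = cnj c * l2Z_inner u a"
  by (metis inner_cnj inner_scale_left complex_cnj_mult)

lemma inner_lin_left:
  assumes "a \<in> l2Z" "b \<in> l2Z" "x \<in> l2Z"
  shows "l2Z_inner (\<lambda>n. a n + t * b n) x = l2Z_inner a x + t * l2Z_inner b x"
  by (simp only: inner_add_left[OF assms(1) l2Z_scale[OF assms(2)] assms(3)] inner_scale_left)

lemma inner_lin_right:
  assumes "a \<in> l2Z" "b \<in> l2Z" "x \<in> l2Z"
  shows "l2Z_inner x (\<lambda>n. a n + t * b n) = l2Z_inner x a + cnj t * l2Z_inner x b"
  by (simp only: inner_add_right[OF assms(1) l2Z_scale[OF assms(2)] assms(3)] inner_scale_right)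

lemma l2Z_norm_nonneg: "l2Z_norm u \<ge> 0"
  unfolding l2Z_norm_def by (simp add: infsum_nonneg)

lemma inner_self:
  assumes "u \<in> l2Z" shows "l2Z_inner u u = complex_of_real ((l2Z_norm u)^2)"
proof -
  have sq: "(\<lambda>n. (cmod (u n))^2) summable_on UNIV" using assms by (simp add: l2Z_def)
  have "l2Z_inner u u = (\<Sum>\<^sub>\<infinity>n. complex_of_real ((cmod (u n))^2))"
    unfolding l2Z_inner_def by (simp only: complex_norm_square)
  also have "\<dots> = complex_of_real (\<Sum>\<^sub>\<infinity>n. (cmod (u n))^2)"
    by (rule infsumI, rule has_sum_of_real, rule has_sum_infsum, rule sq)
  finally show ?thesis by (simp add: l2Z_norm_def infsum_nonneg)
qed

lemma l2Z_norm_pos: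
  assumes "u \<in> l2Z" "u \<noteq> (\<lambda>_. 0)" shows "l2Z_norm u > 0"
proof (rule ccontr)
  have "(\<Sum>\<^sub>\<infinity>n. (cmod (u n))^2) \<ge> 0" by (simp add: infsum_nonneg)
  moreover assume "\<not> l2Z_norm u > 0"
  ultimately have "(\<Sum>\<^sub>\<infinity>n. (cmod (u n))^2) = 0" by (simp add: l2Z_norm_def)
  moreover have "(\<lambda>n. (cmod (u n))^2) summable_on UNIV" using assms by (simp add: l2Z_def)
  ultimately have "(cmod (u n))^2 = 0" for n by (intro nonneg_infsum_le_0D) auto
  then have "u = (\<lambda>_. 0)" by (intro ext) simp
  with assms(2) show False by contradiction
qed

lemma normalize_l2Z:
  assumes "u \<in> l2Z" "l2Z_norm u > 0"
  defines "c \<equiv> complex_of_real (1 / l2Z_norm u)"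
  shows "(\<lambda>n. c * u n) \<in> l2Z" and "l2Z_norm (\<lambda>n. c * u n) = 1"
    and "c * cnj c = 1 / complex_of_real ((l2Z_norm u)^2)"
proof -
  show cc: "c * cnj c = 1 / complex_of_real ((l2Z_norm u)^2)"
    by (simp add: c_def power2_eq_square)
  show xl: "(\<lambda>n. c * u n) \<in> l2Z" by (rule l2Z_scale[OF assms(1)])
  have "complex_of_real ((l2Z_norm (\<lambda>n. c * u n))^2) = c * cnj c * l2Z_inner u u"
    by (simp only: inner_self[OF xl, symmetric] inner_scale_left inner_scale_right mult.assoc)
  also have "\<dots> = 1" using assms(2) by (simp add: cc inner_self[OF assms(1)])
  finally have "(l2Z_norm (\<lambda>n. c * u n))^2 = 1" by (metis of_real_eq_1_iff)
  then show "l2Z_norm (\<lambda>n. c * u n) = 1"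
    using l2Z_norm_nonneg[of "\<lambda>n. c * u n"] by (auto simp: power2_eq_1_iff)
qed

section \<open>The Jacobi operator and its adjoint\<close>

lemma jacobi_lin: "jacobiJ d (\<lambda>n. u n + t * w n) = (\<lambda>n. jacobiJ d u n + t * jacobiJ d w n)"
  by (auto simp: jacobiJ_def algebra_simps)

lemma jacobi_scale: "jacobiJ d (\<lambda>n. c * w n) = (\<lambda>n. c * jacobiJ d w n)"
  by (auto simp: jacobiJ_def algebra_simps)

lemma inner_shift: "l2Z_inner (\<lambda>n. v (n + k)) u = l2Z_inner v (\<lambda>n. u (n - k))"
proof -
  have "l2Z_inner (\<lambda>n. v (n + k)) u = (\<Sum>\<^sub>\<infinity>n. (\<lambda>m. v m * cnj (u (m - k))) (n + k))"
    unfolding l2Z_inner_def by simp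
  also have "\<dots> = (\<Sum>\<^sub>\<infinity>m. v m * cnj (u (m - k)))"
    by (rule infsum_reindex_bij_betw[OF bij_shift])
  finally show ?thesis by (simp add: l2Z_inner_def)
qed

lemma inner_mult: "l2Z_inner (\<lambda>n. d n * v n) u = l2Z_inner v (\<lambda>n. cnj (d n) * u n)"
  unfolding l2Z_inner_def by (simp add: mult_ac)

lemma jacobi_adjoint:
  assumes "v \<in> l2Z" "u \<in> l2Z" "bounded (range d)"
  shows "l2Z_inner (jacobiJ d v) u = l2Z_inner v (jacobiJ (\<lambda>n. cnj (d n)) u)"
proof -
  have bd: "bounded (range (\<lambda>n. cnj (d n)))" using assms(3) unfolding bounded_iff by auto
  have down: "x \<in> l2Z \<Longrightarrow> (\<lambda>n. x (n - 1)) \<in> l2Z" for x using l2Z_shift[of x "-1"] by simp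
  have "l2Z_inner (jacobiJ d v) u
      = l2Z_inner (\<lambda>n. v (n + -1)) u + l2Z_inner (\<lambda>n. d n * v n) u + l2Z_inner (\<lambda>n. v (n + 1)) u"
    unfolding jacobiJ_def by (simp add: inner_add_left l2Z_add l2Z_shift down l2Z_mult_bounded assms)
  also have "\<dots> = l2Z_inner v (\<lambda>n. u (n + 1)) + l2Z_inner v (\<lambda>n. cnj (d n) * u n)
       + l2Z_inner v (\<lambda>n. u (n - 1))"
    by (simp only: inner_shift inner_mult) simp
  also have "\<dots> = l2Z_inner v (jacobiJ (\<lambda>n. cnj (d n)) u)"
    unfolding jacobiJ_def by (simp add: inner_add_right l2Z_add l2Z_shift down l2Z_mult_bounded assms bd)
  finally show ?thesis .
qed

lemma rayleigh_in_numrange: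
  assumes bd: "bounded (range d)" and v: "v \<in> l2Z" and pos: "l2Z_norm v > 0"
  shows "l2Z_inner (jacobiJ d v) v / complex_of_real ((l2Z_norm v)^2) \<in> numrange d"
proof -
  define c where "c = complex_of_real (1 / l2Z_norm v)"
  note unit = normalize_l2Z[OF v pos, folded c_def]
  have "l2Z_inner (jacobiJ d (\<lambda>n. c * v n)) (\<lambda>n. c * v n) = c * cnj c * l2Z_inner (jacobiJ d v) v"
    unfolding jacobi_scale by (simp add: inner_scale_left inner_scale_right)
  also have "\<dots> = l2Z_inner (jacobiJ d v) v / complex_of_real ((l2Z_norm v)^2)"
    unfolding unit(3) by simp
  finally have "l2Z_inner (jacobiJ d v) v / complex_of_real ((l2Z_norm v)^2)
      = l2Z_inner (jacobiJ d (\<lambda>n. c * v n)) (\<lambda>n. c * v n)" by (rule sym)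
  then show ?thesis unfolding numrange_def using unit(1,2) by blast
qed

section \<open>Boundary eigenvalues are eigenvalues of the adjoint\<close>

text \<open>A continuous map h on [0, r0] with |h r0| <= a r0 has a "modulus fixed point":
  some t with t a = h |t|.  This is the intermediate value theorem applied to
  r a - |h r|.\<close>

lemma modulus_fixed_point:
  fixes h :: "real \<Rightarrow> complex" and a r0 :: real
  assumes a: "a > 0" and r0: "r0 \<ge> 0" and cont: "\<And>r. isCont h r"
    and end_bound: "cmod (h r0) \<le> r0 * a"
  shows "\<exists>t. t * complex_of_real a = h (cmod t)"
proof -
  define g where "g = (\<lambda>r. r * a - cmod (h r))"
  have cont_g: "\<forall>x. 0 \<le> x \<and> x \<le> r0 \<longrightarrow> isCont g x"
    unfolding g_def using cont by (intro allI impI continuous_intros)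
  have "g 0 \<le> 0" "0 \<le> g r0" using end_bound by (simp_all add: g_def)
  then obtain r where r: "0 \<le> r" "g r = 0" using IVT[OF _ _ r0 cont_g] by blast
  define t where "t = h r / complex_of_real a"
  have "cmod (h r) = r * a" using r(2) by (simp add: g_def)
  then have "cmod t = r" using a by (simp add: t_def norm_divide)
  moreover have "t * complex_of_real a = h r" using a by (simp add: t_def)
  ultimately show ?thesis by metis
qed

text \<open>For a > 0 the curve t \<mapsto> (z + t a + |t|^2 B) / (1 + |t|^2 a) covers a
  neighbourhood of its value z at t = 0.  Writing r = |t|, the equation
  \<zeta> = value at t is equivalent to the fixed-point equation t a = h r with
  h r = (\<zeta> - z)(1 + r^2 a) - r^2 (B - z a), which is solved by the previous lemma.\<close>

lemma curve_covers_neighbourhood: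
  fixes a :: real and z B :: complex
  assumes a: "a > 0"
  shows "\<exists>e>0. \<forall>\<zeta>. cmod (\<zeta> - z) < e \<longrightarrow>
     (\<exists>t. \<zeta> = (z + t * of_real a + of_real ((cmod t)^2) * B) / (1 + of_real ((cmod t)^2 * a)))"
proof -
  define C where "C = cmod (B - z * of_real a)"
  define r0 where "r0 = min 1 (a / (2 * (C + 1)))"
  define e where "e = r0 * a / (4 * (1 + a))"
  have C0: "C \<ge> 0" by (simp add: C_def)
  have r0: "0 < r0" "r0 \<le> 1" using a C0 by (auto simp: r0_def)
  have e: "e > 0" using r0 a by (simp add: e_def)
  have "\<exists>t. \<zeta> = (z + t * of_real a + of_real ((cmod t)^2) * B) / (1 + of_real ((cmod t)^2 * a))"
    if ze: "cmod (\<zeta> - z) < e" for \<zeta>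
  proof -
    define h where "h = (\<lambda>r::real. (\<zeta> - z) * (1 + of_real (r^2 * a)) - of_real (r^2) * (B - z * of_real a))"
    have quad: "r0^2 * C \<le> r0 * a / 2"
    proof -
      have "r0 * C \<le> (a / (2 * (C + 1))) * C"
        using C0 by (intro mult_right_mono) (simp_all add: r0_def)
      also have "\<dots> \<le> a / 2" using a C0 by (simp add: field_simps)
      finally show ?thesis using r0 by (simp add: power2_eq_square mult_left_mono mult.assoc)
    qed
    have lin: "cmod (\<zeta> - z) * (1 + r0^2 * a) < r0 * a / 2"
    proof -
      have "1 + r0^2 * a \<le> 1 + a" using r0 a by (simp add: power_le_one mult_left_le_one_le)
      then have "cmod (\<zeta> - z) * (1 + r0^2 * a) \<le> e * (1 + a)"
        using ze a e by (intro mult_mono) auto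
      also have "\<dots> = r0 * a / 4" using a unfolding e_def by (simp add: field_simps)
      also have "\<dots> < r0 * a / 2" using r0 a by simp
      finally show ?thesis .
    qed
    have "cmod (h r0) \<le> cmod ((\<zeta> - z) * (1 + of_real (r0^2 * a))) + cmod (of_real (r0^2) * (B - z * of_real a))"
      unfolding h_def by (rule norm_triangle_ineq4)
    also have "\<dots> = cmod (\<zeta> - z) * (1 + r0^2 * a) + r0^2 * C"
    proof -
      have "cmod (1 + complex_of_real (r0^2*a)) = 1 + r0^2 * a"
        using a norm_of_real[of "1 + r0^2*a"] by simp
      moreover have "cmod (complex_of_real (r0^2)) = r0^2" by (simp only: norm_of_real) simp
      ultimately show ?thesis by (simp only: norm_mult C_def)
    qed
    finally have "cmod (h r0) \<le> r0 * a" using quad lin by simp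
    moreover have "isCont h r" for r unfolding h_def by (intro continuous_intros)
    ultimately obtain t where t: "t * of_real a = h (cmod t)"
      using modulus_fixed_point[OF a, of r0 h] r0 by auto
    have "0 < 1 + (cmod t)^2 * a" using a by (intro add_pos_nonneg) auto
    then have "1 + complex_of_real ((cmod t)^2 * a) \<noteq> 0"
      by (metis of_real_1 of_real_add of_real_eq_0_iff less_irrefl)
    then show ?thesis using t unfolding h_def by (intro exI[of _ t]) (simp add: field_simps)
  qed
  with e show ?thesis by blast
qed

lemma rayleigh_along_line:
  assumes bd: "bounded (range d)" and u: "u \<in> l2Z" and w: "w \<in> l2Z"
    and uu: "l2Z_inner u u = 1" and uw: "l2Z_inner u w = 0" and wu: "l2Z_inner w u = 0"
    and ww: "l2Z_inner w w = of_real a" and a: "a > 0"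
    and eig: "jacobiJ d u = (\<lambda>n. z * u n)" and Jwu: "l2Z_inner (jacobiJ d w) u = of_real a"
  shows "(z + t * of_real a + of_real ((cmod t)^2) * l2Z_inner (jacobiJ d w) w)
           / (1 + of_real ((cmod t)^2 * a)) \<in> numrange d"
proof -
  define B where "B = l2Z_inner (jacobiJ d w) w"
  define v where "v = (\<lambda>n. u n + t * w n)"
  have vl: "v \<in> l2Z" unfolding v_def by (intro l2Z_add l2Z_scale u w)
  have Jul: "jacobiJ d u \<in> l2Z" and Jwl: "jacobiJ d w \<in> l2Z" using l2Z_jacobi bd u w by auto
  have tt: "t * cnj t = of_real ((cmod t)^2)" by (rule complex_norm_square[symmetric])
  have Juv: "l2Z_inner (jacobiJ d u) v = z"
    unfolding v_def inner_lin_right[OF u w Jul] unfolding eig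
    by (simp add: inner_scale_left uu uw)
  have Jwv: "l2Z_inner (jacobiJ d w) v = of_real a + cnj t * B"
    unfolding v_def inner_lin_right[OF u w Jwl] Jwu B_def by simp
  have Jvv: "l2Z_inner (jacobiJ d v) v = z + t * of_real a + of_real ((cmod t)^2) * B"
    unfolding v_def jacobi_lin inner_lin_left[OF Jul Jwl vl[unfolded v_def]]
    unfolding v_def[symmetric] Juv Jwv tt[symmetric] by (simp add: algebra_simps)
  have "l2Z_inner v v = 1 + t * cnj t * of_real a"
    unfolding v_def inner_lin_left[OF u w vl[unfolded v_def]] inner_lin_right[OF u w u]
      inner_lin_right[OF u w w] uu uw wu ww by (simp add: algebra_simps)
  then have "complex_of_real ((l2Z_norm v)^2) = complex_of_real (1 + (cmod t)^2 * a)"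
    unfolding inner_self[OF vl] tt by simp
  then have vv: "(l2Z_norm v)^2 = 1 + (cmod t)^2 * a" by (simp only: of_real_eq_iff)
  then have "(l2Z_norm v)^2 > 0" using a by (simp add: add_pos_nonneg)
  then have "l2Z_norm v > 0" using l2Z_norm_nonneg[of v] by (auto simp: le_less)
  moreover have "complex_of_real ((l2Z_norm v)^2) = 1 + of_real ((cmod t)^2 * a)"
    by (simp only: vv of_real_add of_real_1)
  ultimately show ?thesis using rayleigh_in_numrange[OF bd vl] unfolding Jvv B_def by (simp only:)
qed

lemma interior_of_numrange:
  assumes bd: "bounded (range d)" and u: "u \<in> l2Z" and nu: "l2Z_norm u = 1"
    and eig: "jacobiJ d u = (\<lambda>n. z * u n)"
    and not_adj: "jacobiJ (\<lambda>n. cnj (d n)) u \<noteq> (\<lambda>n. cnj z * u n)"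
  shows "z \<in> interior (numrange d)"
proof -
  define Js where "Js = jacobiJ (\<lambda>n. cnj (d n)) u"
  define w where "w = (\<lambda>n. Js n + (- cnj z) * u n)"
  have Jsl: "Js \<in> l2Z" unfolding Js_def
    using bd by (intro l2Z_jacobi u) (auto simp: bounded_iff)
  have wl: "w \<in> l2Z" unfolding w_def by (intro l2Z_add l2Z_scale Jsl u)
  have Js_w: "Js = (\<lambda>n. w n + cnj z * u n)" by (auto simp: w_def)
  have uu: "l2Z_inner u u = 1" using inner_self[OF u] nu by simp
  have "l2Z_inner u Js = z"
    using jacobi_adjoint[OF u u bd] unfolding Js_def eig by (simp add: inner_scale_left uu)
  then have uw: "l2Z_inner u w = 0"
    unfolding w_def inner_add_right[OF Jsl l2Z_scale[OF u] u] inner_scale_right by (simp add: uu)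
  have wu: "l2Z_inner w u = 0" using inner_cnj[of w u] uw by simp
  have "w \<noteq> (\<lambda>_. 0)" using not_adj unfolding Js_def[symmetric] Js_w by auto
  then have wpos: "l2Z_norm w > 0" using l2Z_norm_pos[OF wl] by blast
  define a where "a = (l2Z_norm w)^2"
  have a: "a > 0" using wpos by (simp add: a_def)
  have ww: "l2Z_inner w w = of_real a" using inner_self[OF wl] by (simp add: a_def)
  have Jwu: "l2Z_inner (jacobiJ d w) u = of_real a"
    using jacobi_adjoint[OF wl u bd] unfolding Js_def[symmetric] Js_w
    by (simp add: inner_add_right inner_scale_right wl u l2Z_scale ww wu)
  obtain e where e: "e > 0" and cover: "\<And>\<zeta>. cmod (\<zeta> - z) < e \<Longrightarrow> \<exists>t. \<zeta> =
      (z + t * of_real a + of_real ((cmod t)^2) * l2Z_inner (jacobiJ d w) w) / (1 + of_real ((cmod t)^2 * a))"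
    using curve_covers_neighbourhood[OF a] by blast
  have "ball z e \<subseteq> numrange d"
  proof
    fix \<zeta> assume "\<zeta> \<in> ball z e"
    then obtain t where "\<zeta> = (z + t * of_real a + of_real ((cmod t)^2) * l2Z_inner (jacobiJ d w) w)
        / (1 + of_real ((cmod t)^2 * a))"
      using cover by (auto simp: dist_norm norm_minus_commute)
    then show "\<zeta> \<in> numrange d"
      using rayleigh_along_line[OF bd u wl uu uw wu ww a eig Jwu] by simp
  qed
  then show ?thesis using e mem_interior by blast
qed

lemma boundary_eigenvector:
  assumes bd: "bounded (range d)" and "is_boundary_eigenvalue d z"
  obtains u where "u \<in> l2Z" "u \<noteq> (\<lambda>_. 0)" "jacobiJ d u = (\<lambda>n. z * u n)"
    "jacobiJ (\<lambda>n. cnj (d n)) u = (\<lambda>n. cnj z * u n)"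
proof -
  obtain u0 where u0: "u0 \<in> l2Z" "u0 \<noteq> (\<lambda>_. 0)" "jacobiJ d u0 = (\<lambda>n. z * u0 n)"
    and fr: "z \<notin> interior (numrange d)"
    using assms(2) unfolding is_boundary_eigenvalue_def is_eigenvalue_def frontier_def by blast
  define c where "c = complex_of_real (1 / l2Z_norm u0)"
  define u where "u = (\<lambda>n. c * u0 n)"
  have pos: "l2Z_norm u0 > 0" using l2Z_norm_pos u0 by blast
  note unit = normalize_l2Z[OF u0(1) pos, folded c_def u_def]
  have eig: "jacobiJ d u = (\<lambda>n. z * u n)" unfolding u_def jacobi_scale u0(3) by (auto simp: mult_ac)
  have "u \<noteq> (\<lambda>_. 0)" using u0(2) pos by (auto simp: u_def c_def fun_eq_iff)
  moreover have "jacobiJ (\<lambda>n. cnj (d n)) u = (\<lambda>n. cnj z * u n)"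
    using interior_of_numrange[OF bd unit(1,2) eig] fr by blast
  ultimately show ?thesis using that unit(1) eig by blast
qed

section \<open>The three-term recurrence\<close>

lemma common_eigenvector_support:
  assumes eig: "jacobiJ d u = (\<lambda>n. z * u n)"
    and adj: "jacobiJ (\<lambda>n. cnj (d n)) u = (\<lambda>n. cnj z * u n)"
    and "u n \<noteq> 0"
  shows "Im (d n) = Im z"
proof -
  have "(d n - cnj (d n)) * u n = jacobiJ d u n - jacobiJ (\<lambda>n. cnj (d n)) u n"
    by (simp add: jacobiJ_def algebra_simps)
  also have "\<dots> = (z - cnj z) * u n" unfolding eig adj by (simp add: algebra_simps)
  finally have "d n - cnj (d n) = z - cnj z" using assms(3) by simp
  then have "Im (d n - cnj (d n)) = Im (z - cnj z)" by simp
  then show ?thesis by simp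
qed

text \<open>The recurrence u(n+1) = (z - d n) u n - u(n-1) propagates two consecutive
  zeros in both directions.\<close>

lemma eigenvector_two_zeros:
  assumes eig: "jacobiJ d u = (\<lambda>n. z * u n)" and zeros: "u m = 0" "u (m + 1) = 0"
  shows "u = (\<lambda>_. 0)"
proof -
  have rec: "u (n - 1) + d n * u n + u (n + 1) = z * u n" for n
    using fun_cong[OF eig, of n] by (simp add: jacobiJ_def)
  have forward: "u (m + int k) = 0 \<and> u (m + int k + 1) = 0" for k
  proof (induction k)
    case (Suc k)
    then show ?case using rec[of "m + int k + 1"] by (simp add: algebra_simps)
  qed (use zeros in simp)
  have backward: "u (m - int k) = 0 \<and> u (m - int k + 1) = 0" for k
  proof (induction k)
    case (Suc k)
    then show ?case using rec[of "m - int k"] by (simp add: algebra_simps)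
  qed (use zeros in simp)
  show ?thesis
  proof
    fix n
    show "u n = 0"
    proof (cases "n \<ge> m")
      case True
      then show ?thesis using forward[of "nat (n - m)"] by simp
    next
      case False
      then show ?thesis using backward[of "nat (m - n)"] by simp
    qed
  qed
qed

lemma small_at_consecutive:
  fixes f :: "int \<Rightarrow> real"
  assumes "(f \<longlongrightarrow> 0) at_top \<or> (f \<longlongrightarrow> 0) at_bot" and "\<epsilon> > 0"
  shows "\<exists>N. \<bar>f N\<bar> < \<epsilon> \<and> \<bar>f (N + 1)\<bar> < \<epsilon>"
  using assms(1)
proof
  assume "(f \<longlongrightarrow> 0) at_top"
  from tendstoD[OF this assms(2)] obtain N where "\<And>n. n \<ge> N \<Longrightarrow> \<bar>f n\<bar> < \<epsilon>"
    unfolding eventually_at_top_linorder by auto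
  then show ?thesis by (meson less_add_one order_less_imp_le order_refl)
next
  assume "(f \<longlongrightarrow> 0) at_bot"
  from tendstoD[OF this assms(2)] obtain N where N: "\<And>n. n \<le> N \<Longrightarrow> \<bar>f n\<bar> < \<epsilon>"
    unfolding eventually_at_bot_linorder by auto
  then show ?thesis using N[of "N - 1"] N[of N] by (intro exI[of _ "N - 1"]) simp
qed

theorem mainTheorem9:
  fixes d :: "int \<Rightarrow> complex"
  assumes "bounded (range d)"
    and "((\<lambda>n. Im (d n)) \<longlongrightarrow> 0) at_top \<or> ((\<lambda>n. Im (d n)) \<longlongrightarrow> 0) at_bot"
    and "\<exists>m. Im (d m) \<noteq> 0 \<and> Im (d (m + 1)) \<noteq> 0"
  shows "\<not> (\<exists>z. is_boundary_eigenvalue d z)"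
proof
  assume "\<exists>z. is_boundary_eigenvalue d z"
  then obtain z where "is_boundary_eigenvalue d z" ..
  then obtain u where u: "u \<noteq> (\<lambda>_. 0)" and eig: "jacobiJ d u = (\<lambda>n. z * u n)"
    and adj: "jacobiJ (\<lambda>n. cnj (d n)) u = (\<lambda>n. cnj z * u n)"
    by (rule boundary_eigenvector[OF assms(1)])
  \<comment> \<open>u vanishes at any two consecutive sites where Im d differs from Im z\<close>
  have no_pair: "\<not> (Im (d N) \<noteq> Im z \<and> Im (d (N + 1)) \<noteq> Im z)" for N
    using common_eigenvector_support[OF eig adj] eigenvector_two_zeros[OF eig] u by blast
  have "Im z = 0"
  proof (rule ccontr)
    assume "Im z \<noteq> 0"
    then obtain N where "\<bar>Im (d N)\<bar> < \<bar>Im z\<bar>" "\<bar>Im (d (N + 1))\<bar> < \<bar>Im z\<bar>"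
      using small_at_consecutive[OF assms(2), of "\<bar>Im z\<bar>"] by auto
    then show False using no_pair[of N] by auto
  qed
  then show False using assms(3) no_pair by auto
qed

end
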